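(* Let $k$ be an infinite field, let $A$ be a $k$-algebra, let $a_1,\ldots,a_m\in A$ and $d\ge1$. If each element of $ka_1+\cdots+ka_m$ is algebraic over $k$ of degree at most $d$, then $P_{\ge0}(a_1,\ldots,a_m)\subseteq P_{\le d-1}(a_1,\ldots,a_m)$; in particular $\dim_kP_{\ge0}(a_1,\ldots,a_m)<\infty$.
   Context: Algebras are associative with unit. For nonnegative integers $i_1,\ldots,i_m$, $p_{i_1,\ldots,i_m}(x_1,\ldots,x_m)$ is the sum of all distinct noncommutative monomials with exactly $i_j$ occurrences of $x_j$ for each $j$ ($p_{0,\ldots,0}=1$); $p_{i_1,\ldots,i_m}(a_1,\ldots,a_m)$ is its evaluation at $x_j=a_j$. $P_n(a_1,\ldots,a_m)=\operatorname{span}_k\{p_{i_1,\ldots,i_m}(a_1,\ldots,a_m)\mid i_1+\cdots+i_m=n\}$, $P_{\le r}(a_1,\ldots,a_m)=\sum_{n=0}^rP_n(a_1,\ldots,a_m)$, and $P_{\ge r}(a_1,\ldots,a_m)=\sum_{n=r}^\infty P_n(a_1,\ldots,a_m)$. Algebraic of degree at most $d$ means a root of a nonzero polynomial in $k[t]$ of degree at most $d$. *)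

theory Defs
  imports Main "HOL-Computational_Algebra.Polynomial"
begin

definition k_algebra :: "('k::field \<Rightarrow> 'b::ring_1 \<Rightarrow> 'b) \<Rightarrow> bool" where
  "k_algebra scal \<longleftrightarrow> vector_space scal \<and>
     (\<forall>c x y. scal c (x * y) = scal c x * y \<and> scal c (x * y) = x * scal c y)"

definition alg_eval :: "('k::field \<Rightarrow> 'b::ring_1 \<Rightarrow> 'b) \<Rightarrow> 'k poly \<Rightarrow> 'b \<Rightarrow> 'b" where
  "alg_eval scal q x = (\<Sum>i\<le>degree q. scal (coeff q i) (x ^ i))"

definition algebraic_deg_le :: "('k::field \<Rightarrow> 'b::ring_1 \<Rightarrow> 'b) \<Rightarrow> nat \<Rightarrow> 'b \<Rightarrow> bool" where
  "algebraic_deg_le scal d x \<longleftrightarrow> (\<exists>q. q \<noteq> 0 \<and> degree q \<le> d \<and> alg_eval scal q x = 0)"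

text \<open>Noncommutative monomials in variables indexed 0..m-1 are words (lists of indices).
  The words with exactly e j occurrences of variable j (for each j < m):\<close>
definition words :: "nat \<Rightarrow> (nat \<Rightarrow> nat) \<Rightarrow> nat list set" where
  "words m e = {w. set w \<subseteq> {..<m} \<and> (\<forall>j<m. count_list w j = e j)}"

definition pe :: "nat \<Rightarrow> (nat \<Rightarrow> 'b::ring_1) \<Rightarrow> (nat \<Rightarrow> nat) \<Rightarrow> 'b" where
  "pe m a e = (\<Sum>w\<in>words m e. prod_list (map a w))"

definition Pn :: "('k::field \<Rightarrow> 'b::ring_1 \<Rightarrow> 'b) \<Rightarrow> nat \<Rightarrow> (nat \<Rightarrow> 'b) \<Rightarrow> nat \<Rightarrow> 'b set" where
  "Pn scal m a n = module.span scal
     {pe m a e | e. (\<forall>j\<ge>m. e j = 0) \<and> (\<Sum>j<m. e j) = n}"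

definition P_le :: "('k::field \<Rightarrow> 'b::ring_1 \<Rightarrow> 'b) \<Rightarrow> nat \<Rightarrow> (nat \<Rightarrow> 'b) \<Rightarrow> nat \<Rightarrow> 'b set" where
  "P_le scal m a r = module.span scal (\<Union>n\<in>{..r}. Pn scal m a n)"

definition P_ge :: "('k::field \<Rightarrow> 'b::ring_1 \<Rightarrow> 'b) \<Rightarrow> nat \<Rightarrow> (nat \<Rightarrow> 'b) \<Rightarrow> nat \<Rightarrow> 'b set" where
  "P_ge scal m a r = module.span scal (\<Union>n\<in>{r..}. Pn scal m a n)"

end

theory Submission
  imports Defs
begin

text \<open>For t in k^m put x(t) = t_1 a_1 + ... + t_m a_m. Expanding the power gives
  x(t)^n = sum of t^e p_e(a) over the multidegrees e of total degree n. Since x(t) is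
  algebraic of degree at most d, every power x(t)^n is a combination of x(t)^0, ..., x(t)^(d-1),
  hence lies in V = P_{<=d-1}(a), for every t. As k is infinite, a polynomial identity in t with
  values in the subspace V forces each coefficient into V (Lagrange interpolation, one variable
  at a time); so every p_e(a) lies in V, and V is spanned by finitely many p_e(a).\<close>

definition lagrange_basis :: "'a::field set \<Rightarrow> 'a \<Rightarrow> 'a poly" where
  "lagrange_basis A a = smult (inverse (\<Prod>b\<in>A - {a}. a - b)) (\<Prod>b\<in>A - {a}. [:- b, 1:])"

lemma poly_lagrange_basis:
  "poly (lagrange_basis A a) x = (\<Prod>b\<in>A - {a}. x - b) * inverse (\<Prod>b\<in>A - {a}. a - b)"
  by (simp add: lagrange_basis_def poly_prod)

lemma poly_lagrange_basis_node:
  assumes "finite A" "c \<in> A"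
  shows "poly (lagrange_basis A a) c = (if c = a then 1 else 0)"
proof (cases "c = a")
  case True
  have "(\<Prod>b\<in>A - {a}. a - b) \<noteq> 0" using assms(1) by simp
  then show ?thesis using True by (simp add: poly_lagrange_basis)
next
  case False
  have "(\<Prod>b\<in>A - {a}. c - b) = 0" using assms False by (subst prod_zero_iff) auto
  then show ?thesis using False by (simp add: poly_lagrange_basis)
qed

lemma degree_lagrange_basis:
  assumes "finite A" "a \<in> A"
  shows "degree (lagrange_basis A a) \<le> card A - 1"
proof -
  have "degree (\<Prod>b\<in>A - {a}. [:- b, 1:]) \<le> (\<Sum>b\<in>A - {a}. degree [:- b, 1 :: 'a:])"
    using degree_prod_sum_le[of "A - {a}" "\<lambda>b. [:- b, 1:]"] assms(1) by (simp add: o_def)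
  also have "\<dots> = card A - 1" using assms by simp
  finally show ?thesis unfolding lagrange_basis_def using degree_smult_le order_trans by blast
qed

lemma lagrange_interpolation:
  fixes p :: "'a::field poly"
  assumes "finite A" "degree p < card A"
  shows "p = (\<Sum>a\<in>A. smult (poly p a) (lagrange_basis A a))"
proof (rule poly_eqI_degree[of A])
  fix x assume "x \<in> A"
  then show "poly p x = poly (\<Sum>a\<in>A. smult (poly p a) (lagrange_basis A a)) x"
    using assms(1) by (simp add: poly_sum poly_lagrange_basis_node if_distrib cong: if_cong)
next
  have "degree (\<Sum>a\<in>A. smult (poly p a) (lagrange_basis A a)) \<le> card A - 1"
    using assms(1) degree_lagrange_basis[OF assms(1)]
    by (intro degree_sum_le) (auto intro: order_trans[OF degree_smult_le])
  then show "degree (\<Sum>a\<in>A. smult (poly p a) (lagrange_basis A a)) < card A"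
    using assms(2) by linarith
qed (fact assms(2))

text \<open>The inverse of the Vandermonde matrix on the nodes A.\<close>
lemma sum_power_mult_coeff_lagrange_basis:
  fixes A :: "'a::field set"
  assumes "finite A" "i < card A"
  shows "(\<Sum>a\<in>A. a ^ i * coeff (lagrange_basis A a) j) = (if i = j then 1 else 0)"
proof -
  have "monom (1::'a) i = (\<Sum>a\<in>A. smult (poly (monom 1 i) a) (lagrange_basis A a))"
    using assms by (intro lagrange_interpolation) (simp_all add: degree_monom_eq)
  then have "coeff (monom (1::'a) i) j = coeff (\<Sum>a\<in>A. smult (a ^ i) (lagrange_basis A a)) j"
    by (simp add: poly_monom)
  then show ?thesis by (simp add: coeff_sum coeff_monom)
qed

definition eval_monomial :: "nat \<Rightarrow> (nat \<Rightarrow> 'a::comm_semiring_1) \<Rightarrow> (nat \<Rightarrow> nat) \<Rightarrow> 'a" where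
  "eval_monomial m t e = (\<Prod>j<m. t j ^ e j)"

lemma eval_monomial_Suc: "eval_monomial (Suc m) t e = t m ^ e m * eval_monomial m t e"
  by (simp add: eval_monomial_def mult.commute)

lemma eval_monomial_fun_upd_ge:
  "m \<le> k \<Longrightarrow> eval_monomial m (t(k := s)) e = eval_monomial m t e"
  by (simp add: eval_monomial_def)

context vector_space
begin

lemma in_subspace_if_power_combinations_in_subspace:
  assumes V: "subspace V" and A: "finite A" "n < card A"
    and comb: "\<And>s. s \<in> A \<Longrightarrow> (\<Sum>i\<le>n. scale (s ^ i) (v i)) \<in> V"
    and "j \<le> n"
  shows "v j \<in> V"
proof -
  have "(\<Sum>i\<le>n. scale (if i = j then 1 else 0) (v i)) = (\<Sum>i\<le>n. if i = j then v i else 0)"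
    by (rule sum.cong) auto
  then have "v j = (\<Sum>i\<le>n. scale (if i = j then 1 else 0) (v i))"
    using \<open>j \<le> n\<close> by simp
  also have "\<dots> = (\<Sum>i\<le>n. scale (\<Sum>a\<in>A. a ^ i * coeff (lagrange_basis A a) j) (v i))"
    using A by (intro sum.cong) (simp_all add: sum_power_mult_coeff_lagrange_basis)
  also have "\<dots> = (\<Sum>a\<in>A. scale (coeff (lagrange_basis A a) j) (\<Sum>i\<le>n. scale (a ^ i) (v i)))"
    by (simp add: scale_sum_left scale_sum_right mult.commute sum.swap[of _ A])
  also have "\<dots> \<in> V"
    by (rule subspace_sum[OF V], rule subspace_scale[OF V], rule comb)
  finally show ?thesis .
qed

text \<open>Only the values of an exponent vector e below m enter its monomial; the hypothesis on E
  makes the monomials of distinct elements of E distinct.\<close>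
lemma in_subspace_if_polynomial_combinations_in_subspace:
  assumes inf: "infinite (UNIV :: 'a set)" and V: "subspace V" and "finite E"
    and "\<And>e e'. e \<in> E \<Longrightarrow> e' \<in> E \<Longrightarrow> (\<forall>j<m. e j = e' j) \<Longrightarrow> e = e'"
    and "\<And>t. (\<Sum>e\<in>E. scale (eval_monomial m t e) (u e)) \<in> V"
    and "e \<in> E"
  shows "u e \<in> V"
  using assms(3-)
proof (induction m arbitrary: E e)
  case 0
  then have "E = {e}" by blast
  then show ?case using "0.prems"(3) by (simp add: eval_monomial_def)
next
  case (Suc m)
  define E' where "E' i = {e' \<in> E. e' m = i}" for i
  define n where "n = Max ((\<lambda>e'. e' m) ` E)"
  have le_n: "e' m \<le> n" if "e' \<in> E" for e'
    unfolding n_def using Suc.prems(1) that by simp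
  obtain A :: "'a set" where A: "finite A" "card A = Suc n"
    using infinite_arbitrarily_large[OF inf] by blast
  txt \<open>Grouped by the exponent of t m, the hypothesis becomes a univariate one in t m.\<close>
  have layers: "(\<Sum>e'\<in>E' i. scale (eval_monomial m t e') (u e')) \<in> V" if "i \<le> n" for i t
  proof (rule in_subspace_if_power_combinations_in_subspace[OF V A(1) _ _ that])
    fix s
    have "(\<Sum>i\<le>n. scale (s ^ i) (\<Sum>e'\<in>E' i. scale (eval_monomial m t e') (u e')))
        = (\<Sum>i\<le>n. \<Sum>e'\<in>E' i. scale (eval_monomial (Suc m) (t(m := s)) e') (u e'))"
      unfolding E'_def by (simp add: scale_sum_right eval_monomial_Suc eval_monomial_fun_upd_ge)
    also have "\<dots> = (\<Sum>e'\<in>E. scale (eval_monomial (Suc m) (t(m := s)) e') (u e'))"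
      unfolding E'_def using Suc.prems(1) le_n by (intro sum.group) auto
    finally show "(\<Sum>i\<le>n. scale (s ^ i) (\<Sum>e'\<in>E' i. scale (eval_monomial m t e') (u e'))) \<in> V"
      using Suc.prems(3) by simp
  qed (simp add: A(2))
  show ?case
  proof (rule Suc.IH)
    show "finite (E' (e m))" using Suc.prems(1) by (simp add: E'_def)
    show "e \<in> E' (e m)" using Suc.prems(4) by (simp add: E'_def)
    show "(\<Sum>e'\<in>E' (e m). scale (eval_monomial m t e') (u e')) \<in> V" for t
      using layers le_n Suc.prems(4) by blast
    show "e' = e''" if "e' \<in> E' (e m)" "e'' \<in> E' (e m)" "\<forall>j<m. e' j = e'' j" for e' e''
      using Suc.prems(2) that by (auto simp: E'_def less_Suc_eq)
  qed
qed

end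

lemma k_algebra_vector_space: "k_algebra scal \<Longrightarrow> vector_space scal"
  by (simp add: k_algebra_def)

lemma k_algebra_scale_mult_left: "k_algebra scal \<Longrightarrow> scal c (x * y) = scal c x * y"
  by (simp add: k_algebra_def)

lemma k_algebra_scale_mult_right: "k_algebra scal \<Longrightarrow> scal c (x * y) = x * scal c y"
  unfolding k_algebra_def by metis

lemma k_algebra_prod_list_scale:
  assumes "k_algebra scal"
  shows "prod_list (map (\<lambda>j. scal (t j) (a j)) w) = scal (prod_list (map t w)) (prod_list (map a w))"
proof -
  interpret vector_space scal by (rule k_algebra_vector_space[OF assms])
  show ?thesis
    by (induction w)
      (simp_all add: k_algebra_scale_mult_left[OF assms] k_algebra_scale_mult_right[OF assms, symmetric]
        mult.commute)
qed

definition words_of_length :: "nat \<Rightarrow> nat \<Rightarrow> nat list set" where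
  "words_of_length m n = {w. set w \<subseteq> {..<m} \<and> length w = n}"

lemma finite_words_of_length: "finite (words_of_length m n)"
  unfolding words_of_length_def by (rule finite_lists_length_eq) simp

lemma power_sum_eq_sum_words_of_length:
  fixes b :: "nat \<Rightarrow> 'b::ring_1"
  shows "(\<Sum>j<m. b j) ^ n = (\<Sum>w\<in>words_of_length m n. prod_list (map b w))"
proof (induction n)
  case 0
  have "words_of_length m 0 = {[]}" by (auto simp: words_of_length_def)
  then show ?case by simp
next
  case (Suc n)
  have inj: "inj_on (\<lambda>(w, j). j # w) (words_of_length m n \<times> {..<m})"
    by (auto simp: inj_on_def)
  have "(\<Sum>j<m. b j) ^ Suc n = (\<Sum>w\<in>words_of_length m n. \<Sum>j<m. b j * prod_list (map b w))"
    using Suc by (simp add: sum_distrib_left sum_distrib_right)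
  also have "\<dots> = (\<Sum>(w, j)\<in>words_of_length m n \<times> {..<m}. prod_list (map b (j # w)))"
    by (simp add: sum.cartesian_product)
  also have "\<dots> = (\<Sum>w\<in>(\<lambda>(w, j). j # w) ` (words_of_length m n \<times> {..<m}). prod_list (map b w))"
    by (subst sum.reindex[OF inj]) (simp add: case_prod_unfold)
  also have "(\<lambda>(w, j). j # w) ` (words_of_length m n \<times> {..<m}) = words_of_length m (Suc n)"
    unfolding words_of_length_def by (rule lists_length_Suc_eq[symmetric])
  finally show ?case .
qed

definition multidegrees :: "nat \<Rightarrow> nat \<Rightarrow> (nat \<Rightarrow> nat) set" where
  "multidegrees m n = {e. (\<forall>j\<ge>m. e j = 0) \<and> (\<Sum>j<m. e j) = n}"

lemma multidegrees_le: "e \<in> multidegrees m n \<Longrightarrow> e j \<le> n"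
  by (cases "j < m") (auto simp: multidegrees_def intro: member_le_sum[of j "{..<m}" e, simplified])

lemma finite_multidegrees: "finite (multidegrees m n)"
proof (rule finite_subset)
  show "multidegrees m n \<subseteq> {e. \<forall>j. (j \<in> {..<m} \<longrightarrow> e j \<in> {..n}) \<and> (j \<notin> {..<m} \<longrightarrow> e j = 0)}"
    using multidegrees_le by (auto simp: multidegrees_def)
qed (rule finite_set_of_finite_funs; simp)

lemma sum_count_list:
  fixes w :: "nat list"
  shows "set w \<subseteq> {..<m} \<Longrightarrow> (\<Sum>j<m. count_list w j) = length w"
proof (induction w)
  case (Cons i w)
  have "(\<Sum>j<m. count_list (i # w) j) = (\<Sum>j<m. (if j = i then 1 else 0) + count_list w j)"
    by (rule sum.cong) auto
  also have "\<dots> = (\<Sum>j<m. if j = i then 1 else 0) + length w"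
    using Cons by (simp add: sum.distrib)
  also have "(\<Sum>j<m. if j = i then 1 else 0 :: nat) = 1"
    using Cons.prems by (subst sum.delta) auto
  finally show ?case by simp
qed simp

lemma prod_list_map_eq_eval_monomial:
  fixes t :: "nat \<Rightarrow> 'a::comm_semiring_1"
  shows "set w \<subseteq> {..<m} \<Longrightarrow> prod_list (map t w) = eval_monomial m t (count_list w)"
proof (induction w)
  case Nil
  show ?case by (simp add: eval_monomial_def)
next
  case (Cons i w)
  have "eval_monomial m t (count_list (i # w))
      = (\<Prod>j<m. (if j = i then t j else 1) * t j ^ count_list w j)"
    unfolding eval_monomial_def by (rule prod.cong) auto
  with Cons show ?case by (simp add: prod.distrib eval_monomial_def)
qed

lemma words_of_length_with_counts:
  assumes "e \<in> multidegrees m n"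
  shows "{w \<in> words_of_length m n. count_list w = e} = words m e"
proof (intro set_eqI iffI)
  fix w assume "w \<in> {w \<in> words_of_length m n. count_list w = e}"
  then show "w \<in> words m e" by (auto simp: words_of_length_def words_def)
next
  fix w assume w: "w \<in> words m e"
  then have set_w: "set w \<subseteq> {..<m}" by (simp add: words_def)
  have "count_list w j = e j" for j
    using w assms set_w count_list_0_iff[of w j]
    by (cases "j < m") (auto simp: words_def multidegrees_def)
  then have "count_list w = e" by blast
  moreover have "length w = n"
    using sum_count_list[OF set_w] \<open>count_list w = e\<close> assms by (simp add: multidegrees_def)
  ultimately show "w \<in> {w \<in> words_of_length m n. count_list w = e}"
    using set_w by (simp add: words_of_length_def)
qed

lemma count_list_in_multidegrees:
  "w \<in> words_of_length m n \<Longrightarrow> count_list w \<in> multidegrees m n"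
  using sum_count_list[of w m] count_list_0_iff[of w]
  by (auto simp: words_of_length_def multidegrees_def)

lemma power_linear_combination:
  assumes "k_algebra scal"
  shows "(\<Sum>j<m. scal (t j) (a j)) ^ n
       = (\<Sum>e\<in>multidegrees m n. scal (eval_monomial m t e) (pe m a e))"
proof -
  interpret vector_space scal by (rule k_algebra_vector_space[OF assms])
  have "(\<Sum>j<m. scal (t j) (a j)) ^ n
      = (\<Sum>w\<in>words_of_length m n. scal (prod_list (map t w)) (prod_list (map a w)))"
    by (simp add: power_sum_eq_sum_words_of_length k_algebra_prod_list_scale[OF assms])
  also have "\<dots> = (\<Sum>e\<in>multidegrees m n. \<Sum>w\<in>{w \<in> words_of_length m n. count_list w = e}.
                    scal (prod_list (map t w)) (prod_list (map a w)))"
    using count_list_in_multidegrees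
    by (intro sum.group[symmetric] finite_words_of_length finite_multidegrees) blast
  also have "\<dots> = (\<Sum>e\<in>multidegrees m n. scal (eval_monomial m t e) (pe m a e))"
  proof (rule sum.cong[OF refl])
    fix e assume "e \<in> multidegrees m n"
    moreover have "prod_list (map t w) = eval_monomial m t e" if "w \<in> words m e" for w
      using that prod_list_map_eq_eval_monomial[of w m t] eval_monomial_def
      by (auto simp: words_def eval_monomial_def intro!: prod.cong)
    ultimately show "(\<Sum>w\<in>{w \<in> words_of_length m n. count_list w = e}.
                        scal (prod_list (map t w)) (prod_list (map a w)))
                   = scal (eval_monomial m t e) (pe m a e)"
      by (simp add: words_of_length_with_counts pe_def scale_sum_right)
  qed
  finally show ?thesis .
qed

lemma power_in_span_lower_powers:
  assumes alg: "k_algebra scal" and "algebraic_deg_le scal d x"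
  shows "x ^ n \<in> module.span scal ((^) x ` {..<d})"
proof -
  interpret vector_space scal by (rule k_algebra_vector_space[OF alg])
  obtain q where q: "q \<noteq> 0" "degree q \<le> d" "alg_eval scal q x = 0"
    using assms(2) unfolding algebraic_deg_le_def by blast
  define D where "D = degree q"
  define c where "c = lead_coeff q"
  have "c \<noteq> 0" using q(1) by (simp add: c_def)
  have "0 = (\<Sum>i<D. scal (coeff q i) (x ^ i)) + scal c (x ^ D)"
    using q(3) by (simp add: alg_eval_def D_def c_def lessThan_Suc_atMost[symmetric])
  then have "scal c (x ^ D) = - (\<Sum>i<D. scal (coeff q i) (x ^ i))"
    by (simp add: eq_neg_iff_add_eq_0 add.commute)
  then have top: "x ^ D = scal (inverse c) (- (\<Sum>i<D. scal (coeff q i) (x ^ i)))"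
    using \<open>c \<noteq> 0\<close> by (metis scale_scale scale_one left_inverse)
  show ?thesis
  proof (induction n rule: less_induct)
    case (less n)
    show ?case
    proof (cases "n < d")
      case True
      then show ?thesis by (intro span_base) auto
    next
      case False
      then have "D \<le> n" using q(2) by (simp add: D_def)
      then have "x ^ n = x ^ (n - D) * x ^ D"
        by (simp flip: power_add)
      also have "\<dots> = scal (inverse c) (- (\<Sum>i<D. scal (coeff q i) (x ^ (n - D + i))))"
        by (simp add: top k_algebra_scale_mult_right[OF alg, symmetric] sum_distrib_left power_add)
      also have "\<dots> \<in> span ((^) x ` {..<d})"
        using less.IH \<open>D \<le> n\<close> by (intro span_scale span_neg span_sum) auto
      finally show ?thesis .
    qed
  qed
qed

lemma (in module) span_UN_span: "span (\<Union>i\<in>I. span (G i)) = span (\<Union>i\<in>I. G i)"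
proof (rule span_eq[THEN iffD2], rule conjI)
  show "(\<Union>i\<in>I. span (G i)) \<subseteq> span (\<Union>i\<in>I. G i)"
    by (auto intro: span_mono[THEN subsetD])
  show "(\<Union>i\<in>I. G i) \<subseteq> span (\<Union>i\<in>I. span (G i))"
    by (auto intro: span_base)
qed

lemma Pn_eq_span: "Pn scal m a n = module.span scal (pe m a ` multidegrees m n)"
proof -
  have "{pe m a e | e. (\<forall>j\<ge>m. e j = 0) \<and> (\<Sum>j<m. e j) = n} = pe m a ` multidegrees m n"
    by (auto simp: multidegrees_def)
  then show ?thesis by (simp add: Pn_def)
qed

lemma P_le_eq_span:
  assumes "vector_space scal"
  shows "P_le scal m a r = module.span scal (pe m a ` (\<Union>n\<le>r. multidegrees m n))"
proof -
  interpret vector_space scal by fact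
  show ?thesis unfolding P_le_def Pn_eq_span span_UN_span image_UN ..
qed

lemma P_ge_eq_span:
  assumes "vector_space scal"
  shows "P_ge scal m a r = module.span scal (pe m a ` (\<Union>n\<in>{r..}. multidegrees m n))"
proof -
  interpret vector_space scal by fact
  show ?thesis unfolding P_ge_def Pn_eq_span span_UN_span image_UN ..
qed

lemma multidegrees_eqI:
  assumes "e \<in> multidegrees m n" "e' \<in> multidegrees m n'" "\<forall>j<m. e j = e' j"
  shows "e = e'"
proof
  show "e j = e' j" for j
    using assms by (cases "j < m") (auto simp: multidegrees_def)
qed

lemma pe_in_P_le:
  fixes scal :: "'k::field \<Rightarrow> 'b::ring_1 \<Rightarrow> 'b"
  assumes inf: "infinite (UNIV :: 'k set)" and alg: "k_algebra scal"
    and algebraic: "\<forall>x \<in> module.span scal (a ` {..<m}). algebraic_deg_le scal d x"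
    and e: "e \<in> multidegrees m n"
  shows "pe m a e \<in> P_le scal m a (d - 1)"
proof -
  interpret vector_space scal by (rule k_algebra_vector_space[OF alg])
  define V where "V = P_le scal m a (d - 1)"
  have V: "subspace V" by (simp add: V_def P_le_def)
  have "(\<Sum>e\<in>multidegrees m n. scal (eval_monomial m t e) (pe m a e)) \<in> V" for t
  proof -
    define x where "x = (\<Sum>j<m. scal (t j) (a j))"
    have expand: "x ^ i = (\<Sum>e\<in>multidegrees m i. scal (eval_monomial m t e) (pe m a e))" for i
      unfolding x_def by (rule power_linear_combination[OF alg])
    have "x ^ i \<in> V" if "i < d" for i
    proof -
      have "x ^ i \<in> Pn scal m a i"
        unfolding expand Pn_eq_span by (intro span_sum span_scale span_base) auto
      also have "Pn scal m a i \<subseteq> V"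
        using that unfolding V_def P_le_def
        by (intro order_trans[OF _ span_superset]) (auto intro!: bexI[of _ i])
      finally show ?thesis .
    qed
    then have "span ((^) x ` {..<d}) \<subseteq> V" by (intro span_minimal V) auto
    moreover have "x \<in> span (a ` {..<m})"
      unfolding x_def by (intro span_sum span_scale span_base) auto
    ultimately have "x ^ n \<in> V"
      using power_in_span_lower_powers[OF alg] algebraic by blast
    then show ?thesis by (simp only: expand)
  qed
  then have "pe m a e \<in> V"
    using multidegrees_eqI
    by (intro in_subspace_if_polynomial_combinations_in_subspace[OF inf V finite_multidegrees _ _ e])
      blast+
  then show ?thesis by (simp add: V_def)
qed

theorem corollary3p3:
  fixes scal :: "'k::field \<Rightarrow> 'b::ring_1 \<Rightarrow> 'b"
    and m d :: nat and a :: "nat \<Rightarrow> 'b"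
  assumes "infinite (UNIV :: 'k set)"
    and "k_algebra scal"
    and "d \<ge> 1"
    and "\<forall>x \<in> module.span scal (a ` {..<m}). algebraic_deg_le scal d x"
  shows "P_ge scal m a 0 \<subseteq> P_le scal m a (d - 1) \<and>
         (\<exists>B. finite B \<and> module.span scal B = P_ge scal m a 0)"
proof -
  interpret vector_space scal by (rule k_algebra_vector_space[OF assms(2)])
  note P_le_span = P_le_eq_span[OF vector_space_axioms, of m a]
  note P_ge_span = P_ge_eq_span[OF vector_space_axioms, of m a]
  have "subspace (P_le scal m a (d - 1))" by (simp add: P_le_def)
  then have ge_le: "P_ge scal m a 0 \<subseteq> P_le scal m a (d - 1)"
    unfolding P_ge_span using pe_in_P_le[OF assms(1,2,4)] by (intro span_minimal) auto
  have le_ge: "P_le scal m a (d - 1) \<subseteq> P_ge scal m a 0"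
    unfolding P_le_span P_ge_span by (intro span_mono) auto
  have "finite (pe m a ` (\<Union>n\<le>d - 1. multidegrees m n))"
    by (simp add: finite_multidegrees)
  then show ?thesis
    using ge_le le_ge P_le_span[of "d - 1"] by blast
qed

end
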